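(* Let $G$ be a finitely generated group and $\mu$ a finitely supported symmetric non-degenerate probability measure on $G$. Let $h:G\to\mathbb{R}$ be a $\mu$-harmonic function of subexponential growth. Then for every element $\gamma$ of finite order in the FC-center $Z^{FC}(G)$ and every $x\in G$, one has $h(\gamma x)=h(x)$.
   Context: Non-degenerate means the support of $\mu$ generates $G$ as a semigroup. The FC-center $Z^{FC}(G)$ is the subgroup of elements with finite conjugacy class. $h$ is $\mu$-harmonic if $h(x)=\sum_g h(xg)\mu(g)$ for all $x$. With $M_h(n)=\max\{|h(x)|:d(e,x)\le n\}$ for a word metric $d$, $h$ has subexponential growth if $e^{-cn}M_h(n)\to0$ as $n\to\infty$ for every $c>0$. *)

theory Defs
  imports "HOL-Algebra.Algebra" "HOL-Analysis.Analysis"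
begin

definition list_prod :: "('a, 'b) monoid_scheme \<Rightarrow> 'a list \<Rightarrow> 'a" where
  "list_prod G l = foldr (\<lambda>a b. a \<otimes>\<^bsub>G\<^esub> b) l \<one>\<^bsub>G\<^esub>"

definition word_length :: "('a, 'b) monoid_scheme \<Rightarrow> 'a set \<Rightarrow> 'a \<Rightarrow> nat" where
  "word_length G S x = (LEAST n. \<exists>l. length l = n \<and>
      set l \<subseteq> S \<union> (\<lambda>s. inv\<^bsub>G\<^esub> s) ` S \<and> list_prod G l = x)"

definition max_on_ball :: "('a, 'b) monoid_scheme \<Rightarrow> 'a set \<Rightarrow> ('a \<Rightarrow> real) \<Rightarrow> nat \<Rightarrow> real" where
  "max_on_ball G S h n = Max ((\<lambda>x. \<bar>h x\<bar>) ` {x \<in> carrier G. word_length G S x \<le> n})"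

definition subexp_growth :: "('a, 'b) monoid_scheme \<Rightarrow> 'a set \<Rightarrow> ('a \<Rightarrow> real) \<Rightarrow> bool" where
  "subexp_growth G S h \<longleftrightarrow>
     (\<forall>c::real. c > 0 \<longrightarrow> (\<lambda>n. exp (- c * real n) * max_on_ball G S h n) \<longlonglongrightarrow> 0)"

definition support :: "('a, 'b) monoid_scheme \<Rightarrow> ('a \<Rightarrow> real) \<Rightarrow> 'a set" where
  "support G \<mu> = {g \<in> carrier G. \<mu> g \<noteq> 0}"

inductive_set semigroup_generated :: "('a, 'b) monoid_scheme \<Rightarrow> 'a set \<Rightarrow> 'a set"
  for G A where
  base: "a \<in> A \<Longrightarrow> a \<in> semigroup_generated G A"
| mult: "a \<in> semigroup_generated G A \<Longrightarrow> b \<in> semigroup_generated G A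
          \<Longrightarrow> a \<otimes>\<^bsub>G\<^esub> b \<in> semigroup_generated G A"

definition good_measure :: "('a, 'b) monoid_scheme \<Rightarrow> ('a \<Rightarrow> real) \<Rightarrow> bool" where
  "good_measure G \<mu> \<longleftrightarrow>
     (\<forall>g \<in> carrier G. \<mu> g \<ge> 0) \<and>
     finite (support G \<mu>) \<and>
     (\<Sum>g \<in> support G \<mu>. \<mu> g) = 1 \<and>
     (\<forall>g \<in> carrier G. \<mu> (inv\<^bsub>G\<^esub> g) = \<mu> g) \<and>
     semigroup_generated G (support G \<mu>) = carrier G"

definition harmonic :: "('a, 'b) monoid_scheme \<Rightarrow> ('a \<Rightarrow> real) \<Rightarrow> ('a \<Rightarrow> real) \<Rightarrow> bool" where
  "harmonic G \<mu> h \<longleftrightarrow>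
     (\<forall>x \<in> carrier G. h x = (\<Sum>g \<in> support G \<mu>. h (x \<otimes>\<^bsub>G\<^esub> g) * \<mu> g))"

definition FC_center :: "('a, 'b) monoid_scheme \<Rightarrow> 'a set" where
  "FC_center G = {g \<in> carrier G.
      finite {x \<otimes>\<^bsub>G\<^esub> g \<otimes>\<^bsub>G\<^esub> inv\<^bsub>G\<^esub> x | x. x \<in> carrier G}}"

definition finite_order :: "('a, 'b) monoid_scheme \<Rightarrow> 'a \<Rightarrow> bool" where
  "finite_order G g \<longleftrightarrow> (\<exists>n::nat. n > 0 \<and> g [^]\<^bsub>G\<^esub> n = \<one>\<^bsub>G\<^esub>)"

end

theory Submission
  imports Defs
begin

text \<open>Replace \<open>\<mu>\<close> by the lazy walk \<open>(\<delta>\<^sub>e + \<mu>)/2\<close> and take a convolution power \<open>\<mu>\<^sub>L\<close> of it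
  that charges every power \<open>c^j\<close>, \<open>j < n\<close>, of every conjugate \<open>c = y\<inverse>\<gamma>y\<close>, where \<open>\<gamma>^n = e\<close>.
  Since \<open>\<gamma>\<close> has finitely many conjugates, these elements all receive mass at least some \<open>\<epsilon> > 0\<close>.
  The difference \<open>u(y) = h(\<gamma>y) - h(y)\<close> is again \<open>\<mu>\<^sub>L\<close>-harmonic, and as \<open>\<gamma>y = yc\<close> the values
  \<open>u(yc^j)\<close>, \<open>j < n\<close>, telescope to \<open>h(yc^n) - h(y) = 0\<close>. Averaging therefore gives
  \<open>|u(y)| \<le> (1 - \<epsilon>) max |u|\<close> over the \<open>\<mu>\<^sub>L\<close>-neighbours of \<open>y\<close>; iterating \<open>k\<close> times bounds \<open>|u(x)|\<close>
  by \<open>(1 - \<epsilon>)^k\<close> times the maximum of \<open>2|h|\<close> on a ball of radius linear in \<open>k\<close>, which tends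
  to \<open>0\<close> by subexponential growth.\<close>

lemma weighted_average_contraction:
  fixes q v :: "'i \<Rightarrow> real" and b :: "nat \<Rightarrow> 'i"
  assumes "finite I" and q_nonneg: "\<forall>i\<in>I. 0 \<le> q i" and q_sum: "(\<Sum>i\<in>I. q i) = 1"
    and b: "\<forall>j<n. b j \<in> I" and "0 < n" and "0 \<le> \<epsilon>" and q_ge: "\<forall>j<n. \<epsilon> \<le> q (b j)"
    and v_sum: "(\<Sum>j<n. v (b j)) = 0" and v_bound: "\<forall>i\<in>I. \<bar>v i\<bar> \<le> B"
  shows "\<bar>\<Sum>i\<in>I. q i * v i\<bar> \<le> (1 - \<epsilon>) * B"
proof -
  define mult where "mult i = real (card {j \<in> {..<n}. b j = i})" for i
  have mult_sum: "(\<Sum>i\<in>I. mult i * f i) = (\<Sum>j<n. f (b j))" for f :: "'i \<Rightarrow> real"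
  proof -
    have "(\<Sum>j<n. f (b j)) = (\<Sum>i\<in>I. \<Sum>j\<in>{j \<in> {..<n}. b j = i}. f (b j))"
      by (rule sum.group[symmetric]) (use \<open>finite I\<close> b in auto)
    also have "\<dots> = (\<Sum>i\<in>I. mult i * f i)"
      by (rule sum.cong) (auto simp: mult_def)
    finally show ?thesis ..
  qed
  text \<open>Removing the mass \<open>\<epsilon>/n\<close> once for each \<open>j < n\<close> from \<open>b j\<close> leaves nonnegative weights of total
    mass \<open>1 - \<epsilon>\<close> and does not change the weighted sum of \<open>v\<close>.\<close>
  define c where "c i = q i - \<epsilon> * mult i / n" for i
  have c_nonneg: "0 \<le> c i" if "i \<in> I" for i
  proof (cases "mult i = 0")
    case False
    then obtain j where "j < n" "b j = i" by (auto simp: mult_def)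
    have "card {j \<in> {..<n}. b j = i} \<le> card {..<n}" by (rule card_mono) auto
    then have "mult i \<le> n" by (simp add: mult_def)
    then have "\<epsilon> * mult i / n \<le> \<epsilon>"
      using \<open>0 < n\<close> \<open>0 \<le> \<epsilon>\<close> by (simp add: field_simps mult_left_mono)
    moreover have "\<epsilon> \<le> q i" using q_ge \<open>j < n\<close> \<open>b j = i\<close> by blast
    ultimately show ?thesis by (simp add: c_def)
  qed (use q_nonneg that in \<open>simp add: c_def\<close>)
  have "(\<Sum>i\<in>I. c i * v i) = (\<Sum>i\<in>I. q i * v i) - \<epsilon> / n * (\<Sum>i\<in>I. mult i * v i)"
    by (simp add: c_def algebra_simps sum_subtractf sum_distrib_left)
  then have c_v: "(\<Sum>i\<in>I. c i * v i) = (\<Sum>i\<in>I. q i * v i)"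
    using mult_sum[of v] v_sum by simp
  have "(\<Sum>i\<in>I. c i) = (\<Sum>i\<in>I. q i) - \<epsilon> / n * (\<Sum>i\<in>I. mult i * 1)"
    by (simp add: c_def sum_subtractf sum_distrib_left)
  then have c_sum: "(\<Sum>i\<in>I. c i) = 1 - \<epsilon>"
    using mult_sum[of "\<lambda>_. 1"] q_sum \<open>0 < n\<close> by simp
  have "\<bar>\<Sum>i\<in>I. c i * v i\<bar> \<le> (\<Sum>i\<in>I. c i * B)"
    by (rule order_trans[OF sum_abs sum_mono])
       (use c_nonneg v_bound in \<open>auto simp: abs_mult intro: mult_left_mono\<close>)
  also have "\<dots> = (1 - \<epsilon>) * B" using c_sum by (simp add: sum_distrib_right[symmetric])
  finally show ?thesis using c_v by simp
qed

lemma sum_lists_length_Suc: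
  "(\<Sum>l\<in>{l. set l \<subseteq> T \<and> length l = Suc k}. f l) =
   (\<Sum>g\<in>T. \<Sum>l\<in>{l. set l \<subseteq> T \<and> length l = k}. f (g # l))"
proof -
  have lists_eq: "{l. set l \<subseteq> T \<and> length l = Suc k} =
        (\<lambda>(g, l). g # l) ` (T \<times> {l. set l \<subseteq> T \<and> length l = k})"
    by (auto simp: length_Suc_conv image_iff)
  have inj: "inj_on (\<lambda>(g, l). g # l) (T \<times> {l. set l \<subseteq> T \<and> length l = k})"
    by (auto simp: inj_on_def)
  show ?thesis
    unfolding lists_eq sum.reindex[OF inj] sum.cartesian_product by (simp add: case_prod_beta)
qed

lemma sum_prod_list_lists_length:
  fixes m :: "'a \<Rightarrow> 'b::comm_semiring_1"
  shows "(\<Sum>l\<in>{l. set l \<subseteq> T \<and> length l = k}. prod_list (map m l)) = (\<Sum>g\<in>T. m g) ^ k"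
proof (induction k)
  case 0
  have "{l. set l \<subseteq> T \<and> length l = 0} = {[]}" by auto
  then show ?case by simp
next
  case (Suc k)
  then show ?case
    by (simp add: sum_lists_length_Suc sum_distrib_left[symmetric] sum_distrib_right[symmetric])
qed

lemma positive_weights_lower_bound:
  fixes q :: "'i \<Rightarrow> real"
  assumes "finite I" "I \<noteq> {}" "\<forall>i\<in>I. 0 < q i" "(\<Sum>i\<in>I. q i) = 1"
  obtains \<epsilon> where "0 < \<epsilon>" "\<epsilon> < 1" "\<forall>i\<in>I. \<epsilon> \<le> q i"
proof
  define \<epsilon> where "\<epsilon> = Min (q ` I) / 2"
  show "0 < \<epsilon>" using assms(1-3) by (simp add: \<epsilon>_def)
  have \<epsilon>_le: "\<epsilon> \<le> q i / 2" if "i \<in> I" for i using assms(1) that by (simp add: \<epsilon>_def)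
  then show "\<forall>i\<in>I. \<epsilon> \<le> q i" using assms(3) by fastforce
  have "q i \<le> 1" if "i \<in> I" for i
    using member_le_sum[of i I q] assms that by (simp add: less_imp_le)
  with \<epsilon>_le assms(2) show "\<epsilon> < 1" by fastforce
qed

lemma subexp_geometric_decay:
  fixes M :: "nat \<Rightarrow> real"
  assumes subexp: "\<forall>c>0. (\<lambda>n. exp (- c * real n) * M n) \<longlonglongrightarrow> 0"
    and "0 < r" "r < 1" "0 < K"
  shows "(\<lambda>k. r ^ k * M (a + k * K)) \<longlonglongrightarrow> 0"
proof -
  define c where "c = - ln r / K"
  have "ln r < 0" using \<open>0 < r\<close> \<open>r < 1\<close> by simp
  then have "0 < c" using \<open>0 < K\<close> by (simp add: c_def divide_neg_pos)
  have "strict_mono (\<lambda>k. a + k * K)" using \<open>0 < K\<close> by (auto simp: strict_mono_def)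
  from LIMSEQ_subseq_LIMSEQ[OF subexp[rule_format, OF \<open>0 < c\<close>] this]
  have "(\<lambda>k. exp (- c * real (a + k * K)) * M (a + k * K)) \<longlonglongrightarrow> 0"
    by (simp add: comp_def)
  then have "(\<lambda>k. exp (c * a) * (exp (- c * real (a + k * K)) * M (a + k * K))) \<longlonglongrightarrow> 0"
    by (rule tendsto_mult_right_zero)
  moreover have "r ^ k = exp (c * a) * exp (- c * real (a + k * K))" for k
  proof -
    have "r ^ k = exp (real k * ln r)" using \<open>0 < r\<close> by (simp add: exp_of_nat_mult)
    also have "real k * ln r = c * a + - c * real (a + k * K)"
      using \<open>0 < K\<close> by (simp add: c_def field_simps)
    finally show ?thesis by (simp add: exp_add[symmetric])
  qed
  ultimately show ?thesis by (simp add: mult.assoc)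
qed

context group
begin

lemma list_prod_Nil [simp]: "list_prod G [] = \<one>"
  by (simp add: list_prod_def)

lemma list_prod_Cons [simp]: "list_prod G (a # l) = a \<otimes> list_prod G l"
  by (simp add: list_prod_def)

lemma list_prod_closed: "set l \<subseteq> carrier G \<Longrightarrow> list_prod G l \<in> carrier G"
  by (induction l) auto

lemma list_prod_append:
  "set l \<subseteq> carrier G \<Longrightarrow> set l' \<subseteq> carrier G \<Longrightarrow> list_prod G (l @ l') = list_prod G l \<otimes> list_prod G l'"
  by (induction l) (auto simp: m_assoc list_prod_closed)

lemma list_prod_replicate_one: "list_prod G (replicate k \<one>) = \<one>"
  by (induction k) auto

lemma generate_imp_word:
  assumes "S \<subseteq> carrier G" "x \<in> generate G S"
  shows "\<exists>l. set l \<subseteq> S \<union> (\<lambda>s. inv s) ` S \<and> list_prod G l = x"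
  using assms(2)
proof (induction rule: generate.induct)
  case one
  show ?case by (rule exI[of _ "[]"]) simp
next
  case (incl g)
  show ?case by (rule exI[of _ "[g]"]) (use incl assms(1) in auto)
next
  case (inv g)
  show ?case by (rule exI[of _ "[inv g]"]) (use inv assms(1) in auto)
next
  case (eng g g')
  then obtain l l' where l: "set l \<subseteq> S \<union> (\<lambda>s. inv s) ` S" "list_prod G l = g"
    and l': "set l' \<subseteq> S \<union> (\<lambda>s. inv s) ` S" "list_prod G l' = g'" by blast
  moreover have "set l \<subseteq> carrier G" "set l' \<subseteq> carrier G" using l l' assms(1) by auto
  ultimately show ?case
    by (intro exI[of _ "l @ l'"]) (simp add: list_prod_append)
qed

lemma semigroup_generated_imp_word:
  assumes "A \<subseteq> carrier G" "x \<in> semigroup_generated G A"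
  shows "\<exists>l. set l \<subseteq> A \<and> list_prod G l = x"
  using assms(2)
proof (induction rule: semigroup_generated.induct)
  case (base a)
  show ?case by (rule exI[of _ "[a]"]) (use base assms(1) in auto)
next
  case (mult a b)
  then obtain l l' where "set l \<subseteq> A" "list_prod G l = a" "set l' \<subseteq> A" "list_prod G l' = b"
    by blast
  with assms(1) show ?case
    by (intro exI[of _ "l @ l'"]) (auto simp: list_prod_append)
qed

lemma word_length_le:
  "set l \<subseteq> S \<union> (\<lambda>s. inv s) ` S \<Longrightarrow> list_prod G l = x \<Longrightarrow> word_length G S x \<le> length l"
  unfolding word_length_def by (rule Least_le) auto

lemma word_of_word_length:
  assumes "S \<subseteq> carrier G" "generate G S = carrier G" "x \<in> carrier G"
  obtains l where "length l = word_length G S x" "set l \<subseteq> S \<union> (\<lambda>s. inv s) ` S" "list_prod G l = x"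
proof -
  have "\<exists>k l. length l = k \<and> set l \<subseteq> S \<union> (\<lambda>s. inv s) ` S \<and> list_prod G l = x"
    using generate_imp_word assms by blast
  from LeastI_ex[OF this] show ?thesis
    using that unfolding word_length_def by blast
qed

lemma word_length_mult:
  assumes "S \<subseteq> carrier G" "generate G S = carrier G" "x \<in> carrier G" "y \<in> carrier G"
  shows "word_length G S (x \<otimes> y) \<le> word_length G S x + word_length G S y"
proof -
  obtain l where l: "length l = word_length G S x" "set l \<subseteq> S \<union> (\<lambda>s. inv s) ` S" "list_prod G l = x"
    using word_of_word_length assms by blast
  obtain l' where l': "length l' = word_length G S y" "set l' \<subseteq> S \<union> (\<lambda>s. inv s) ` S" "list_prod G l' = y"
    using word_of_word_length assms by blast
  have "set l \<subseteq> carrier G" "set l' \<subseteq> carrier G" using l(2) l'(2) assms(1) by auto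
  then have "list_prod G (l @ l') = x \<otimes> y" using l l' by (simp add: list_prod_append)
  then have "word_length G S (x \<otimes> y) \<le> length (l @ l')"
    by (intro word_length_le) (use l l' in auto)
  then show ?thesis using l l' by simp
qed

lemma finite_word_ball:
  assumes "finite S" "S \<subseteq> carrier G" "generate G S = carrier G"
  shows "finite {x \<in> carrier G. word_length G S x \<le> r}"
proof (rule finite_subset)
  show "{x \<in> carrier G. word_length G S x \<le> r} \<subseteq>
        list_prod G ` {l. set l \<subseteq> S \<union> (\<lambda>s. inv s) ` S \<and> length l \<le> r}"
  proof
    fix x assume x: "x \<in> {x \<in> carrier G. word_length G S x \<le> r}"
    then obtain l where "length l = word_length G S x" "set l \<subseteq> S \<union> (\<lambda>s. inv s) ` S" "list_prod G l = x"
      using word_of_word_length assms by blast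
    with x show "x \<in> list_prod G ` {l. set l \<subseteq> S \<union> (\<lambda>s. inv s) ` S \<and> length l \<le> r}" by force
  qed
  show "finite (list_prod G ` {l. set l \<subseteq> S \<union> (\<lambda>s. inv s) ` S \<and> length l \<le> r})"
    using assms(1) by (intro finite_imageI finite_lists_length_le) auto
qed

lemma abs_le_max_on_ball:
  assumes "finite S" "S \<subseteq> carrier G" "generate G S = carrier G"
    and "x \<in> carrier G" "word_length G S x \<le> r"
  shows "\<bar>h x\<bar> \<le> max_on_ball G S h r"
  unfolding max_on_ball_def
  by (rule Max_ge) (use finite_word_ball[OF assms(1-3)] assms(4,5) in auto)

lemma harmonic_lists_length:
  fixes m h :: "'a \<Rightarrow> real"
  assumes "T \<subseteq> carrier G" and harm: "\<forall>y\<in>carrier G. h y = (\<Sum>g\<in>T. m g * h (y \<otimes> g))"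
    and "y \<in> carrier G"
  shows "h y = (\<Sum>l\<in>{l. set l \<subseteq> T \<and> length l = k}. prod_list (map m l) * h (y \<otimes> list_prod G l))"
  using \<open>y \<in> carrier G\<close>
proof (induction k arbitrary: y)
  case 0
  have "{l. set l \<subseteq> T \<and> length l = 0} = {[]}" by auto
  with 0 show ?case by simp
next
  case (Suc k)
  let ?L = "{l. set l \<subseteq> T \<and> length l = k}"
  have "h y = (\<Sum>g\<in>T. m g * h (y \<otimes> g))" using harm Suc.prems by blast
  also have "\<dots> = (\<Sum>g\<in>T. m g * (\<Sum>l\<in>?L. prod_list (map m l) * h (y \<otimes> g \<otimes> list_prod G l)))"
    using Suc assms(1) by (intro sum.cong) auto
  also have "\<dots> = (\<Sum>g\<in>T. \<Sum>l\<in>?L. m g * (prod_list (map m l) * h (y \<otimes> g \<otimes> list_prod G l)))"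
    by (simp add: sum_distrib_left)
  also have "\<dots> = (\<Sum>g\<in>T. \<Sum>l\<in>?L. prod_list (map m (g # l)) * h (y \<otimes> list_prod G (g # l)))"
    by (intro sum.cong refl)
       (use assms(1) Suc.prems in \<open>auto simp: m_assoc list_prod_closed subset_iff\<close>)
  also have "\<dots> = (\<Sum>l\<in>{l. set l \<subseteq> T \<and> length l = Suc k}. prod_list (map m l) * h (y \<otimes> list_prod G l))"
    by (rule sum_lists_length_Suc[symmetric])
  finally show ?case .
qed

lemma lazy_walk:
  assumes \<mu>: "good_measure G \<mu>" and "harmonic G \<mu> h"
  obtains T m where "finite T" "T \<subseteq> carrier G" "\<one> \<in> T"
    "\<forall>x\<in>carrier G. \<exists>l. set l \<subseteq> T \<and> list_prod G l = x"
    "\<forall>g\<in>T. 0 < m g" "(\<Sum>g\<in>T. m g) = 1" "\<forall>y\<in>carrier G. h y = (\<Sum>g\<in>T. m g * h (y \<otimes> g))"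
proof -
  define P where "P = support G \<mu>"
  define T where "T = insert \<one> P"
  define m where "m g = ((if g = \<one> then 1 else 0) + \<mu> g) / 2" for g
  have \<mu>_nonneg: "\<forall>g\<in>carrier G. 0 \<le> \<mu> g" and "finite P" and \<mu>_sum: "(\<Sum>g\<in>P. \<mu> g) = 1"
    and generated: "semigroup_generated G P = carrier G"
    using \<mu> by (auto simp: good_measure_def P_def)
  have "P \<subseteq> carrier G" "\<forall>g\<in>P. 0 < \<mu> g"
    using \<mu>_nonneg by (auto simp: P_def support_def less_le)
  have "finite T" "T \<subseteq> carrier G"
    using \<open>finite P\<close> \<open>P \<subseteq> carrier G\<close> by (auto simp: T_def)
  have average: "(\<Sum>g\<in>T. m g * f g) = (f \<one> + (\<Sum>g\<in>P. \<mu> g * f g)) / 2" for f :: "'a \<Rightarrow> real"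
  proof -
    have "(\<Sum>g\<in>T. \<mu> g * f g) = (\<Sum>g\<in>P. \<mu> g * f g)"
      by (rule sum.mono_neutral_right) (use \<open>finite T\<close> in \<open>auto simp: T_def P_def support_def\<close>)
    moreover have "(\<Sum>g\<in>T. m g * f g) = (\<Sum>g\<in>T. ((if g = \<one> then f g else 0) + \<mu> g * f g) / 2)"
      by (rule sum.cong[OF refl]) (simp add: m_def field_simps)
    then have "(\<Sum>g\<in>T. m g * f g) = ((\<Sum>g\<in>T. (if g = \<one> then f g else 0)) + (\<Sum>g\<in>T. \<mu> g * f g)) / 2"
      by (simp only: sum_divide_distrib[symmetric] sum.distrib)
    ultimately show ?thesis using \<open>finite T\<close> by (simp add: T_def)
  qed
  show ?thesis
  proof (rule that)
    show "finite T" "T \<subseteq> carrier G" "\<one> \<in> T" by fact+ (simp add: T_def)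
    show "\<forall>x\<in>carrier G. \<exists>l. set l \<subseteq> T \<and> list_prod G l = x"
      using semigroup_generated_imp_word[OF \<open>P \<subseteq> carrier G\<close>] generated by (fastforce simp: T_def)
    show "\<forall>g\<in>T. 0 < m g"
      using \<mu>_nonneg \<open>\<forall>g\<in>P. 0 < \<mu> g\<close> by (auto simp: T_def m_def add_pos_nonneg)
    show "(\<Sum>g\<in>T. m g) = 1"
      using average[of "\<lambda>_. 1"] \<mu>_sum by simp
    show "\<forall>y\<in>carrier G. h y = (\<Sum>g\<in>T. m g * h (y \<otimes> g))"
    proof
      fix y assume "y \<in> carrier G"
      then have "(\<Sum>g\<in>P. \<mu> g * h (y \<otimes> g)) = h y"
        using \<open>harmonic G \<mu> h\<close> by (simp add: harmonic_def P_def mult.commute)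
      then show "h y = (\<Sum>g\<in>T. m g * h (y \<otimes> g))"
        using average[of "\<lambda>g. h (y \<otimes> g)"] \<open>y \<in> carrier G\<close> by simp
    qed
  qed
qed

lemma words_of_common_length:
  assumes "finite F" "\<one> \<in> T" "T \<subseteq> carrier G" "\<forall>x\<in>F. \<exists>l. set l \<subseteq> T \<and> list_prod G l = x"
  obtains L where "\<forall>x\<in>F. \<exists>l. set l \<subseteq> T \<and> length l = L \<and> list_prod G l = x"
proof -
  from assms(4) obtain w where w: "\<forall>x\<in>F. set (w x) \<subseteq> T \<and> list_prod G (w x) = x" by metis
  define L where "L = Max ((\<lambda>x. length (w x)) ` F)"
  have "set (w x @ replicate (L - length (w x)) \<one>) \<subseteq> T \<and> length (w x @ replicate (L - length (w x)) \<one>) = L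
        \<and> list_prod G (w x @ replicate (L - length (w x)) \<one>) = x" if "x \<in> F" for x
  proof -
    have "length (w x) \<le> L" using \<open>finite F\<close> that by (auto simp: L_def)
    moreover have "set (w x) \<subseteq> carrier G" using w that assms(3) by blast
    moreover have "x \<in> carrier G" using calculation(2) w that by (metis list_prod_closed)
    ultimately show ?thesis
      using w that assms(2)
      by (simp add: list_prod_append list_prod_replicate_one list_prod_closed set_replicate_conv_if)
  qed
  then show ?thesis using that by blast
qed

lemma lazy_power_walk:
  assumes "good_measure G \<mu>" "harmonic G \<mu> h" "finite F" "F \<subseteq> carrier G"
  obtains I :: "'a list set" and q where "finite I" "list_prod G ` I \<subseteq> carrier G"
    "\<forall>l\<in>I. 0 < q l" "(\<Sum>l\<in>I. q l) = 1"
    "\<forall>y\<in>carrier G. h y = (\<Sum>l\<in>I. q l * h (y \<otimes> list_prod G l))" "F \<subseteq> list_prod G ` I"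
proof -
  obtain T m where T: "finite T" "T \<subseteq> carrier G" "\<one> \<in> T"
    "\<forall>x\<in>carrier G. \<exists>l. set l \<subseteq> T \<and> list_prod G l = x"
    and m: "\<forall>g\<in>T. 0 < m g" "(\<Sum>g\<in>T. m g) = 1" "\<forall>y\<in>carrier G. h y = (\<Sum>g\<in>T. m g * h (y \<otimes> g))"
    by (rule lazy_walk[OF assms(1,2)])
  obtain L where L: "\<forall>x\<in>F. \<exists>l. set l \<subseteq> T \<and> length l = L \<and> list_prod G l = x"
    by (rule words_of_common_length[OF assms(3) T(3,2)]) (use T(4) assms(4) in blast)
  define I where "I = {l. set l \<subseteq> T \<and> length l = L}"
  have pos: "0 < prod_list (map m l)" if "set l \<subseteq> T" for l
    using that m(1) by (induction l) auto
  show ?thesis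
  proof (rule that[of I "\<lambda>l. prod_list (map m l)"])
    show "finite I"
      unfolding I_def by (rule finite_lists_length_eq[OF T(1)])
    show "list_prod G ` I \<subseteq> carrier G"
      using T(2) by (auto simp: I_def intro!: list_prod_closed)
    show "\<forall>l\<in>I. 0 < prod_list (map m l)"
      using pos by (simp add: I_def)
    show "(\<Sum>l\<in>I. prod_list (map m l)) = 1"
      using m(2) by (simp add: I_def sum_prod_list_lists_length)
    show "\<forall>y\<in>carrier G. h y = (\<Sum>l\<in>I. prod_list (map m l) * h (y \<otimes> list_prod G l))"
      using harmonic_lists_length[OF T(2) m(3)] by (simp add: I_def)
    show "F \<subseteq> list_prod G ` I"
      using L by (force simp: I_def)
  qed
qed

lemma conj_nat_pow:
  assumes "y \<in> carrier G" "g \<in> carrier G"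
  shows "(inv y \<otimes> g \<otimes> y) [^] (k::nat) = inv y \<otimes> g [^] k \<otimes> y"
proof (induction k)
  case (Suc k)
  have cancel: "y \<otimes> (inv y \<otimes> z) = z" if "z \<in> carrier G" for z
    using that assms by (simp add: m_assoc[symmetric])
  from Suc show ?case using assms by (simp add: m_assoc cancel)
qed (use assms in simp)

lemma finite_conjugates_of_FC_center:
  assumes "\<gamma> \<in> FC_center G"
  shows "finite {inv y \<otimes> \<gamma> \<otimes> y | y. y \<in> carrier G}"
proof (rule finite_subset)
  show "{inv y \<otimes> \<gamma> \<otimes> y | y. y \<in> carrier G} \<subseteq> {x \<otimes> \<gamma> \<otimes> inv x | x. x \<in> carrier G}"
  proof
    fix z assume "z \<in> {inv y \<otimes> \<gamma> \<otimes> y | y. y \<in> carrier G}"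
    then obtain y where "y \<in> carrier G" "z = inv y \<otimes> \<gamma> \<otimes> inv (inv y)" by auto
    then show "z \<in> {x \<otimes> \<gamma> \<otimes> inv x | x. x \<in> carrier G}" by blast
  qed
  show "finite {x \<otimes> \<gamma> \<otimes> inv x | x. x \<in> carrier G}"
    using assms by (simp add: FC_center_def)
qed

lemma sum_translate_difference_conjugate_powers:
  fixes h :: "'a \<Rightarrow> real" and n :: nat
  assumes "\<gamma> \<in> carrier G" "\<gamma> [^] n = \<one>" "y \<in> carrier G"
  defines "c \<equiv> inv y \<otimes> \<gamma> \<otimes> y"
  shows "(\<Sum>j<n. h (\<gamma> \<otimes> (y \<otimes> c [^] j)) - h (y \<otimes> c [^] j)) = 0"
proof -
  have "c \<in> carrier G" "c [^] n = \<one>"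
    using assms conj_nat_pow[OF assms(3,1), of n] by simp_all
  have "\<gamma> \<otimes> y = y \<otimes> c"
    using assms by (simp add: m_assoc[symmetric])
  then have "\<gamma> \<otimes> (y \<otimes> c [^] j) = y \<otimes> (c \<otimes> c [^] j)" for j :: nat
    using \<open>c \<in> carrier G\<close> assms(1,3) by (simp add: m_assoc[symmetric])
  then have "(\<Sum>j<n. h (\<gamma> \<otimes> (y \<otimes> c [^] j)) - h (y \<otimes> c [^] j)) =
             (\<Sum>j<n. h (y \<otimes> c [^] Suc j) - h (y \<otimes> c [^] j))"
    using \<open>c \<in> carrier G\<close> by (simp only: nat_pow_Suc2)
  also have "\<dots> = h (y \<otimes> c [^] n) - h (y \<otimes> c [^] (0::nat))"
    by (rule sum_lessThan_telescope)
  finally show ?thesis using \<open>c [^] n = \<one>\<close> assms(3) by simp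
qed

lemma translate_difference_contraction:
  fixes p :: "'i \<Rightarrow> 'a" and q :: "'i \<Rightarrow> real" and n :: nat
  assumes "finite I" "p ` I \<subseteq> carrier G" "(\<Sum>i\<in>I. q i) = 1"
    and harm: "\<forall>z\<in>carrier G. h z = (\<Sum>i\<in>I. q i * h (z \<otimes> p i))"
    and "\<gamma> \<in> carrier G" "0 < n" "\<gamma> [^] n = \<one>" and "y \<in> carrier G"
    and powers: "\<forall>j<n. (inv y \<otimes> \<gamma> \<otimes> y) [^] j \<in> p ` I"
    and "0 \<le> \<epsilon>" and q_ge: "\<forall>i\<in>I. \<epsilon> \<le> q i"
    and bound: "\<forall>i\<in>I. \<bar>h (\<gamma> \<otimes> (y \<otimes> p i)) - h (y \<otimes> p i)\<bar> \<le> B"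
  shows "\<bar>h (\<gamma> \<otimes> y) - h y\<bar> \<le> (1 - \<epsilon>) * B"
proof -
  define u where "u z = h (\<gamma> \<otimes> z) - h z" for z
  from powers obtain b where b: "\<forall>j<n. b j \<in> I \<and> p (b j) = (inv y \<otimes> \<gamma> \<otimes> y) [^] j"
    unfolding image_iff by metis
  have "u y = (\<Sum>i\<in>I. q i * u (y \<otimes> p i))"
  proof -
    have "h (\<gamma> \<otimes> y) = (\<Sum>i\<in>I. q i * h (\<gamma> \<otimes> (y \<otimes> p i)))"
      using harm assms(2,5,8) by (auto simp: m_assoc intro!: sum.cong)
    moreover have "h y = (\<Sum>i\<in>I. q i * h (y \<otimes> p i))"
      using harm assms(8) by blast
    ultimately show ?thesis by (simp add: u_def sum_subtractf right_diff_distrib)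
  qed
  moreover have "(\<Sum>j<n. u (y \<otimes> p (b j))) = 0"
    using sum_translate_difference_conjugate_powers[OF assms(5,7,8), of h] b
    by (simp add: u_def)
  ultimately have "\<bar>u y\<bar> \<le> (1 - \<epsilon>) * B"
    using weighted_average_contraction[of I q n b \<epsilon> "\<lambda>i. u (y \<otimes> p i)" B] assms(1,3,6,10) q_ge b bound
    by (force simp: u_def)
  then show ?thesis by (simp add: u_def)
qed

lemma iterate_contraction:
  fixes u :: "'a \<Rightarrow> real" and len :: "'a \<Rightarrow> nat" and \<beta> :: "nat \<Rightarrow> real"
  assumes contract: "\<forall>y\<in>carrier G. \<forall>B. (\<forall>i\<in>I. \<bar>u (y \<otimes> p i)\<bar> \<le> B) \<longrightarrow> \<bar>u y\<bar> \<le> r * B"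
    and "p ` I \<subseteq> carrier G"
    and step: "\<forall>y\<in>carrier G. \<forall>i\<in>I. len (y \<otimes> p i) \<le> len y + K"
    and base: "\<forall>z\<in>carrier G. \<forall>R. len z \<le> R \<longrightarrow> \<bar>u z\<bar> \<le> \<beta> R"
    and "y \<in> carrier G" "len y \<le> R"
  shows "\<bar>u y\<bar> \<le> r ^ k * \<beta> (R + k * K)"
  using assms(5,6)
proof (induction k arbitrary: y R)
  case 0
  then show ?case using base by simp
next
  case (Suc k)
  have "\<forall>i\<in>I. \<bar>u (y \<otimes> p i)\<bar> \<le> r ^ k * \<beta> ((R + K) + k * K)"
  proof
    fix i assume "i \<in> I"
    then have "y \<otimes> p i \<in> carrier G" "len (y \<otimes> p i) \<le> R + K"
      using Suc.prems step \<open>p ` I \<subseteq> carrier G\<close> by fastforce+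
    then show "\<bar>u (y \<otimes> p i)\<bar> \<le> r ^ k * \<beta> ((R + K) + k * K)" by (rule Suc.IH)
  qed
  then have "\<bar>u y\<bar> \<le> r * (r ^ k * \<beta> ((R + K) + k * K))"
    using contract Suc.prems(1) by blast
  then show ?case by (simp add: algebra_simps)
qed

lemma word_length_steps_bounded:
  assumes "S \<subseteq> carrier G" "generate G S = carrier G" "finite I" "p ` I \<subseteq> carrier G"
  obtains K where "0 < K" "\<forall>y\<in>carrier G. \<forall>i\<in>I. word_length G S (y \<otimes> p i) \<le> word_length G S y + K"
proof
  define K where "K = Max ((\<lambda>i. word_length G S (p i)) ` I) + 1"
  show "0 < K" by (simp add: K_def)
  show "\<forall>y\<in>carrier G. \<forall>i\<in>I. word_length G S (y \<otimes> p i) \<le> word_length G S y + K"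
  proof (intro ballI)
    fix y i assume "y \<in> carrier G" "i \<in> I"
    then have "word_length G S (y \<otimes> p i) \<le> word_length G S y + word_length G S (p i)"
      using word_length_mult[OF assms(1,2)] assms(4) by blast
    moreover have "word_length G S (p i) \<le> Max ((\<lambda>i. word_length G S (p i)) ` I)"
      using assms(3) \<open>i \<in> I\<close> by simp
    ultimately show "word_length G S (y \<otimes> p i) \<le> word_length G S y + K"
      by (simp add: K_def)
  qed
qed

lemma abs_translate_difference_le_max_on_ball:
  assumes S: "finite S" "S \<subseteq> carrier G" "generate G S = carrier G"
    and "\<gamma> \<in> carrier G" "z \<in> carrier G" "word_length G S z \<le> R"
  shows "\<bar>h (\<gamma> \<otimes> z) - h z\<bar> \<le> 2 * max_on_ball G S h (R + word_length G S \<gamma>)"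
proof -
  have "word_length G S (\<gamma> \<otimes> z) \<le> R + word_length G S \<gamma>"
    using word_length_mult[OF S(2,3) assms(4,5)] assms(6) by simp
  then show ?thesis
    using abs_le_max_on_ball[OF S, of "\<gamma> \<otimes> z" "R + word_length G S \<gamma>" h]
      abs_le_max_on_ball[OF S, of z "R + word_length G S \<gamma>" h] assms(4-6)
    by simp
qed

lemma subexp_harmonic_translation_invariant:
  fixes p :: "'i \<Rightarrow> 'a" and q :: "'i \<Rightarrow> real" and n :: nat
  assumes S: "finite S" "S \<subseteq> carrier G" "generate G S = carrier G" and "subexp_growth G S h"
    and walk: "finite I" "p ` I \<subseteq> carrier G" "\<forall>i\<in>I. 0 < q i" "(\<Sum>i\<in>I. q i) = 1"
    and harm: "\<forall>y\<in>carrier G. h y = (\<Sum>i\<in>I. q i * h (y \<otimes> p i))"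
    and \<gamma>: "\<gamma> \<in> carrier G" "0 < n" "\<gamma> [^] n = \<one>"
    and powers: "\<forall>y\<in>carrier G. \<forall>j<n. (inv y \<otimes> \<gamma> \<otimes> y) [^] j \<in> p ` I"
    and "x \<in> carrier G"
  shows "h (\<gamma> \<otimes> x) = h x"
proof -
  have "I \<noteq> {}" using powers \<gamma> by fastforce
  obtain \<epsilon> where \<epsilon>: "0 < \<epsilon>" "\<epsilon> < 1" "\<forall>i\<in>I. \<epsilon> \<le> q i"
    using positive_weights_lower_bound[OF walk(1) \<open>I \<noteq> {}\<close> walk(3,4)] by blast
  obtain K where K: "0 < K" "\<forall>y\<in>carrier G. \<forall>i\<in>I. word_length G S (y \<otimes> p i) \<le> word_length G S y + K"
    using word_length_steps_bounded[OF S(2,3) walk(1,2)] by blast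
  define u where "u z = h (\<gamma> \<otimes> z) - h z" for z
  define \<beta> where "\<beta> R = 2 * max_on_ball G S h (R + word_length G S \<gamma>)" for R
  have "\<forall>y\<in>carrier G. \<forall>B. (\<forall>i\<in>I. \<bar>u (y \<otimes> p i)\<bar> \<le> B) \<longrightarrow> \<bar>u y\<bar> \<le> (1 - \<epsilon>) * B"
    using translate_difference_contraction[OF walk(1,2,4) harm \<gamma>] powers \<epsilon>
    by (simp add: u_def less_imp_le)
  moreover have "\<forall>z\<in>carrier G. \<forall>R. word_length G S z \<le> R \<longrightarrow> \<bar>u z\<bar> \<le> \<beta> R"
    using abs_translate_difference_le_max_on_ball[OF S \<gamma>(1)] by (simp add: u_def \<beta>_def)
  ultimately have bound: "\<bar>u x\<bar> \<le> (1 - \<epsilon>) ^ k * \<beta> (word_length G S x + k * K)" for k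
    using iterate_contraction[OF _ walk(2) K(2) _ \<open>x \<in> carrier G\<close> order_refl] by blast
  have "(\<lambda>k. (1 - \<epsilon>) ^ k * max_on_ball G S h ((word_length G S x + word_length G S \<gamma>) + k * K))
        \<longlonglongrightarrow> 0"
    by (rule subexp_geometric_decay) (use \<open>subexp_growth G S h\<close> \<epsilon> K in \<open>auto simp: subexp_growth_def\<close>)
  from tendsto_mult_left_zero[OF this, of 2]
  have "(\<lambda>k. (1 - \<epsilon>) ^ k * \<beta> (word_length G S x + k * K)) \<longlonglongrightarrow> 0"
    by (simp add: \<beta>_def algebra_simps)
  with bound have "\<bar>u x\<bar> \<le> 0" by (intro LIMSEQ_le_const) auto
  then show ?thesis by (simp add: u_def)
qed

lemma FC_center_finite_order_translation_invariant:
  assumes "finite S" "S \<subseteq> carrier G" "generate G S = carrier G"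
    and "good_measure G \<mu>" "harmonic G \<mu> h" "subexp_growth G S h"
    and \<gamma>: "\<gamma> \<in> FC_center G" and "finite_order G \<gamma>" and x: "x \<in> carrier G"
  shows "h (\<gamma> \<otimes> x) = h x"
proof -
  obtain n :: nat where n: "0 < n" "\<gamma> [^] n = \<one>"
    using \<open>finite_order G \<gamma>\<close> unfolding finite_order_def by blast
  have "\<gamma> \<in> carrier G" using \<gamma> by (simp add: FC_center_def)
  define F where "F = (\<lambda>(c, j::nat). c [^] j) ` ({inv y \<otimes> \<gamma> \<otimes> y | y. y \<in> carrier G} \<times> {..<n})"
  have "finite F" using finite_conjugates_of_FC_center[OF \<gamma>] by (simp add: F_def)
  moreover have "F \<subseteq> carrier G" using \<open>\<gamma> \<in> carrier G\<close> by (auto simp: F_def)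
  ultimately obtain I q where walk: "finite I" "list_prod G ` I \<subseteq> carrier G"
    "\<forall>l\<in>I. 0 < q l" "(\<Sum>l\<in>I. q l) = 1"
    "\<forall>y\<in>carrier G. h y = (\<Sum>l\<in>I. q l * h (y \<otimes> list_prod G l))" "F \<subseteq> list_prod G ` I"
    by (rule lazy_power_walk[OF assms(4,5)])
  have "\<forall>y\<in>carrier G. \<forall>j<n. (inv y \<otimes> \<gamma> \<otimes> y) [^] j \<in> list_prod G ` I"
    using walk(6) by (force simp: F_def)
  then show ?thesis
    using subexp_harmonic_translation_invariant[OF assms(1-3,6) walk(1-5) \<open>\<gamma> \<in> carrier G\<close> n] x
    by blast
qed

end

theorem proposition3p3:
  fixes G :: "('a, 'b) monoid_scheme" and S :: "'a set"
    and \<mu> :: "'a \<Rightarrow> real" and h :: "'a \<Rightarrow> real"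
  assumes "group G"
    and "finite S" and "S \<subseteq> carrier G" and "generate G S = carrier G"
    and "good_measure G \<mu>"
    and "harmonic G \<mu> h"
    and "subexp_growth G S h"
  shows "\<forall>\<gamma> \<in> FC_center G. finite_order G \<gamma> \<longrightarrow>
           (\<forall>x \<in> carrier G. h (\<gamma> \<otimes>\<^bsub>G\<^esub> x) = h x)"
  using group.FC_center_finite_order_translation_invariant[OF assms] by blast

end
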